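(* Let $\lambda\in[-1,1/d)$ and let $\gamma:I\to\mathbb{R}^d$ be a continuous $\lambda$-curve. Then there exists $\rho>0$ such that for every $t\in I$ and every $q\in\mathrm{sec}^+(t)$ there exists $\xi_t\in\mathbb{S}^{d-1}$ with $\langle\xi_t,u\rangle\le-\rho$ for all $u\in K(t)$ with $\|u\|=1$, and $\langle\xi_t,q\rangle\ge\rho$.
   Context: $\mathbb{R}^d$ carries the Euclidean inner product $\langle\cdot,\cdot\rangle$ and norm $\|\cdot\|$; $I\subset\mathbb{R}$ is an interval; $\mathbb{S}^{d-1}$ the unit sphere. $\gamma$ is a $\lambda$-curve if for all $t_1\le t_2\le t_3$ in $I$: $\|\gamma(t_1)-\gamma(t_2)\|\le\|\gamma(t_1)-\gamma(t_3)\|+\lambda\|\gamma(t_2)-\gamma(t_3)\|$. $K(t)$ is the closed convex cone generated by $\{\gamma(t')-\gamma(t): t'\in I, t'\le t\}$. $\mathrm{sec}^+(t)=\{q\in\mathbb{S}^{d-1}: q=\lim_k\frac{\gamma(t_k)-\gamma(t)}{\|\gamma(t_k)-\gamma(t)\|}$ for some $t_k\to t$, $t_k>t\}$. *)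

theory Defs
  imports "HOL-Analysis.Analysis"
begin

definition lambda_curve :: "real \<Rightarrow> real set \<Rightarrow> (real \<Rightarrow> 'a::euclidean_space) \<Rightarrow> bool" where
  "lambda_curve lam I \<gamma> \<longleftrightarrow>
     (\<forall>t1\<in>I. \<forall>t2\<in>I. \<forall>t3\<in>I. t1 \<le> t2 \<longrightarrow> t2 \<le> t3 \<longrightarrow>
        norm (\<gamma> t1 - \<gamma> t2) \<le> norm (\<gamma> t1 - \<gamma> t3) + lam * norm (\<gamma> t2 - \<gamma> t3))"

definition backcone :: "real set \<Rightarrow> (real \<Rightarrow> 'a::euclidean_space) \<Rightarrow> real \<Rightarrow> 'a set" where
  "backcone I \<gamma> t = closure (convex_cone hull {\<gamma> t' - \<gamma> t | t'. t' \<in> I \<and> t' \<le> t})"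

definition sec_plus :: "real set \<Rightarrow> (real \<Rightarrow> 'a::euclidean_space) \<Rightarrow> real \<Rightarrow> 'a set" where
  "sec_plus I \<gamma> t = {q \<in> sphere 0 1. \<exists>tk::nat \<Rightarrow> real.
      (\<forall>k. tk k \<in> I \<and> tk k > t \<and> \<gamma> (tk k) \<noteq> \<gamma> t) \<and> tk \<longlonglongrightarrow> t \<and>
      (\<lambda>k. (\<gamma> (tk k) - \<gamma> t) /\<^sub>R norm (\<gamma> (tk k) - \<gamma> t)) \<longlonglongrightarrow> q}"

end

theory Submission
  imports Defs
begin

(* Fix t and q, and let S consist of the unit backward secant directions at t together with -q.
   The lambda-curve inequality gives <x, y> >= -lambda for distinct x, y in S: directly for two
   backward secants, and in the limit along the forward secants for a backward secant against -q.
   By Caratheodory and Cauchy-Schwarz every point of conv S then has squared norm at least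
   (1 - lambda d) / (d + 1) > 0, so conv S is separated from a ball of radius independent of t and q
   around the origin. The separating normal xi works, since the closed convex cone
   {u. <xi, u> <= -rho |u|} contains every backward difference and hence K(t). *)

lemma norm_convex_combination_ge:
  fixes T :: "'a::real_inner set" and c :: "'a \<Rightarrow> real" and lam :: real
  assumes T: "finite T" "T \<noteq> {}"
    and unit: "\<And>x. x \<in> T \<Longrightarrow> norm x = 1"
    and pair: "\<And>x y. x \<in> T \<Longrightarrow> y \<in> T \<Longrightarrow> x \<noteq> y \<Longrightarrow> - lam \<le> inner x y"
    and lam: "-1 \<le> lam"
    and c: "\<And>x. x \<in> T \<Longrightarrow> 0 \<le> c x" "sum c T = 1"
  shows "(1 + lam) / card T - lam \<le> (norm (\<Sum>x\<in>T. c x *\<^sub>R x))\<^sup>2"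
proof -
  define g where "g x y = (if x = y then 1 + lam else 0) - lam" for x y :: 'a
  have "(\<Sum>x\<in>T. \<Sum>y\<in>T. c x * c y * g x y) \<le> (\<Sum>x\<in>T. \<Sum>y\<in>T. c x * c y * inner x y)"
  proof (intro sum_mono mult_left_mono)
    fix x y assume "x \<in> T" "y \<in> T"
    then show "g x y \<le> inner x y" "0 \<le> c x * c y"
      using unit pair c(1) by (auto simp: g_def dot_square_norm)
  qed
  also have "\<dots> = (norm (\<Sum>x\<in>T. c x *\<^sub>R x))\<^sup>2"
    unfolding power2_norm_eq_inner inner_sum_left inner_sum_right
    by (simp add: sum_distrib_left mult.assoc, subst sum.swap, simp add: mult.left_commute)
  finally have quadratic: "(\<Sum>x\<in>T. \<Sum>y\<in>T. c x * c y * g x y) \<le> (norm (\<Sum>x\<in>T. c x *\<^sub>R x))\<^sup>2" .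
  have diagonal: "(\<Sum>x\<in>T. \<Sum>y\<in>T. c x * c y * (if x = y then 1 + lam else 0))
      = (1 + lam) * (\<Sum>x\<in>T. (c x)\<^sup>2)"
    using T(1) by (simp add: sum_distrib_left power2_eq_square if_distrib sum.delta mult.commute cong: if_cong)
  have "(\<Sum>x\<in>T. \<Sum>y\<in>T. c x * c y * lam) = lam"
    using c(2) by (simp add: sum_distrib_right[symmetric] sum_distrib_left[symmetric])
  with diagonal have "(\<Sum>x\<in>T. \<Sum>y\<in>T. c x * c y * g x y) = (1 + lam) * (\<Sum>x\<in>T. (c x)\<^sup>2) - lam"
    by (simp add: g_def right_diff_distrib sum_subtractf)
  moreover have "1 / card T \<le> (\<Sum>x\<in>T. (c x)\<^sup>2)"
    using Cauchy_Schwarz_ineq_sum[of c "\<lambda>_. 1" T] c(2) T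
    by (simp add: divide_le_eq mult.commute card_gt_0_iff)
  then have "(1 + lam) / card T \<le> (1 + lam) * (\<Sum>x\<in>T. (c x)\<^sup>2)"
    using lam mult_left_mono[of "1 / card T" _ "1 + lam"] by simp
  ultimately show ?thesis
    using quadratic by linarith
qed

lemma norm_convex_hull_unit_vectors_ge:
  fixes S :: "'a::euclidean_space set" and lam :: real
  assumes unit: "\<And>x. x \<in> S \<Longrightarrow> norm x = 1"
    and pair: "\<And>x y. x \<in> S \<Longrightarrow> y \<in> S \<Longrightarrow> x \<noteq> y \<Longrightarrow> - lam \<le> inner x y"
    and lam: "-1 \<le> lam"
    and v: "v \<in> convex hull S"
  shows "(1 - lam * DIM('a)) / (DIM('a) + 1) \<le> (norm v)\<^sup>2"
proof -
  obtain T where T: "finite T" "T \<subseteq> S" "card T \<le> DIM('a) + 1" "v \<in> convex hull T"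
    using v caratheodory by blast
  then obtain c where c: "\<And>x. x \<in> T \<Longrightarrow> 0 \<le> c x" "sum c T = 1" "(\<Sum>x\<in>T. c x *\<^sub>R x) = v"
    unfolding convex_hull_finite[OF T(1)] by blast
  have "T \<noteq> {}"
    using c(2) by auto
  with T have "(1 + lam) / (DIM('a) + 1) \<le> (1 + lam) / card T"
    using lam by (intro divide_left_mono) (auto simp: card_gt_0_iff)
  moreover have "(1 + lam) / card T - lam \<le> (norm v)\<^sup>2"
    unfolding c(3)[symmetric] using T(2) unit pair
    by (intro norm_convex_combination_ge[OF T(1) \<open>T \<noteq> {}\<close> _ _ lam c(1,2)]) blast+
  moreover have "(1 - lam * DIM('a)) / (DIM('a) + 1) = (1 + lam) / (DIM('a) + 1) - lam"
    by (simp add: field_simps)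
  ultimately show ?thesis
    by linarith
qed

lemma convex_separate_from_origin:
  fixes C :: "'a::euclidean_space set"
  assumes "convex C" "C \<noteq> {}" "r > 0" and far: "\<And>v. v \<in> C \<Longrightarrow> r \<le> norm v"
  shows "\<exists>\<xi>\<in>sphere 0 1. \<forall>v\<in>C. inner \<xi> v \<le> - (r / 2)"
proof -
  have "cball 0 (r / 2) \<inter> C = {}"
    using far \<open>r > 0\<close> by (fastforce simp: mem_cball_0)
  moreover have "cball 0 (r / 2) \<noteq> {}"
    using \<open>r > 0\<close> by simp
  ultimately obtain a b where a: "a \<noteq> 0" "\<forall>x\<in>cball 0 (r / 2). inner a x \<le> b" "\<forall>x\<in>C. b \<le> inner a x"
    using separating_hyperplane_sets[OF convex_cball \<open>convex C\<close> _ \<open>C \<noteq> {}\<close>] by blast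
  have "(r / 2 / norm a) *\<^sub>R a \<in> cball 0 (r / 2)"
    using a(1) \<open>r > 0\<close> by simp
  then have "inner a ((r / 2 / norm a) *\<^sub>R a) \<le> b"
    using a(2) by blast
  then have "r / 2 * norm a \<le> b"
    using a(1) by (simp add: dot_square_norm power2_eq_square)
  then have "inner (- a /\<^sub>R norm a) v \<le> - (r / 2)" if "v \<in> C" for v
  proof -
    have "r / 2 * norm a \<le> inner a v"
      using \<open>r / 2 * norm a \<le> b\<close> a(3) that by force
    then have "r / 2 \<le> inner a v / norm a"
      using a(1) by (simp add: pos_le_divide_eq)
    then show ?thesis
      by (simp add: inverse_eq_divide)
  qed
  moreover have "- a /\<^sub>R norm a \<in> sphere 0 1"
    using a(1) by simp
  ultimately show ?thesis
    by blast
qed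

lemma unit_vectors_strictly_separated:
  fixes S :: "'a::euclidean_space set" and lam :: real
  assumes unit: "\<And>x. x \<in> S \<Longrightarrow> norm x = 1"
    and pair: "\<And>x y. x \<in> S \<Longrightarrow> y \<in> S \<Longrightarrow> x \<noteq> y \<Longrightarrow> - lam \<le> inner x y"
    and lam: "-1 \<le> lam" "lam < 1 / DIM('a)"
    and "S \<noteq> {}"
  shows "\<exists>\<xi>\<in>sphere 0 1. \<forall>x\<in>S. inner \<xi> x \<le> - (sqrt ((1 - lam * DIM('a)) / (DIM('a) + 1)) / 2)"
proof -
  define r where "r = sqrt ((1 - lam * DIM('a)) / (DIM('a) + 1))"
  have "lam * DIM('a) < 1"
    using lam(2) by (simp add: less_divide_eq mult.commute)
  then have "r > 0"
    unfolding r_def by simp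
  have "r \<le> norm v" if "v \<in> convex hull S" for v
    using real_sqrt_le_mono[OF norm_convex_hull_unit_vectors_ge[OF unit pair lam(1) that]]
    unfolding r_def by simp
  then obtain \<xi> where "\<xi> \<in> sphere 0 1" "\<forall>v\<in>convex hull S. inner \<xi> v \<le> - (r / 2)"
    using convex_separate_from_origin[of "convex hull S" r] \<open>r > 0\<close> \<open>S \<noteq> {}\<close> by auto
  then show ?thesis
    unfolding r_def by (blast intro: hull_inc)
qed

lemma inner_ge_if_norm_diff_le:
  fixes u v :: "'a::real_inner" and lam :: real
  assumes le: "norm (u - v) \<le> norm u + lam * norm v" and lam: "\<bar>lam\<bar> \<le> 1"
  shows "- lam * norm u * norm v \<le> inner u v"
proof -
  have "0 \<le> norm u + lam * norm v"
    using le norm_ge_zero order_trans by blast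
  then have "(norm (u - v))\<^sup>2 \<le> (norm u + lam * norm v)\<^sup>2"
    using le by (intro power_mono) auto
  moreover have "(norm (u - v))\<^sup>2 = (norm u)\<^sup>2 - 2 * inner u v + (norm v)\<^sup>2"
    by (simp add: power2_norm_eq_inner inner_diff_left inner_diff_right inner_commute)
  moreover have "lam\<^sup>2 * (norm v)\<^sup>2 \<le> (norm v)\<^sup>2"
    using lam by (simp add: abs_square_le_1[symmetric] mult_left_le_one_le)
  ultimately show ?thesis
    by (simp add: power2_eq_square algebra_simps)
qed

lemma inner_sgn_sgn_ge_if_norm_diff_le:
  fixes u v :: "'a::real_inner" and lam :: real
  assumes "norm (u - v) \<le> norm u + lam * norm v" "\<bar>lam\<bar> \<le> 1" "u \<noteq> 0" "v \<noteq> 0"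
  shows "- lam \<le> inner (sgn u) (sgn v)"
proof -
  have "- lam * norm u * norm v \<le> inner u v"
    using assms(1,2) by (rule inner_ge_if_norm_diff_le)
  then have "- lam \<le> inner u v / (norm u * norm v)"
    using assms(3,4) by (simp add: le_divide_eq)
  then show ?thesis
    by (simp add: sgn_div_norm inverse_eq_divide mult.commute)
qed

lemma inner_le_if_norm_le_diff:
  fixes u v :: "'a::real_inner" and lam :: real
  assumes le: "norm u \<le> norm (u - v) + lam * norm v" and small: "lam * norm v \<le> norm u"
  shows "inner u v \<le> lam * norm u * norm v + (1 - lam\<^sup>2) * (norm v)\<^sup>2 / 2"
proof -
  have "(norm u - lam * norm v)\<^sup>2 \<le> (norm (u - v))\<^sup>2"
    using le small by (intro power_mono) auto
  moreover have "(norm (u - v))\<^sup>2 = (norm u)\<^sup>2 - 2 * inner u v + (norm v)\<^sup>2"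
    by (simp add: power2_norm_eq_inner inner_diff_left inner_diff_right inner_commute)
  ultimately have "2 * inner u v \<le> 2 * lam * norm u * norm v + (1 - lam\<^sup>2) * (norm v)\<^sup>2"
    by (simp add: power2_eq_square algebra_simps)
  then show ?thesis
    by (simp add: field_simps)
qed

lemma inner_sgn_limit_le:
  fixes u q :: "'a::real_inner" and b :: "nat \<Rightarrow> 'a" and lam :: real
  assumes "u \<noteq> 0" and b: "b \<longlonglongrightarrow> 0" "\<And>k. b k \<noteq> 0"
    and le: "\<And>k. norm u \<le> norm (u - b k) + lam * norm (b k)"
    and q: "(\<lambda>k. sgn (b k)) \<longlonglongrightarrow> q"
  shows "inner (sgn u) q \<le> lam"
proof -
  have "(\<lambda>k. \<bar>lam\<bar> * norm (b k)) \<longlonglongrightarrow> \<bar>lam\<bar> * 0"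
    using b(1) by (intro tendsto_intros) (simp add: tendsto_norm_zero_iff)
  then have "eventually (\<lambda>k. \<bar>lam\<bar> * norm (b k) < norm u) sequentially"
    using \<open>u \<noteq> 0\<close> by (intro order_tendstoD) auto
  then have "eventually (\<lambda>k. inner u (sgn (b k)) \<le> lam * norm u + (1 - lam\<^sup>2) * norm (b k) / 2) sequentially"
  proof eventually_elim
    case (elim k)
    have "lam * norm (b k) \<le> \<bar>lam\<bar> * norm (b k)"
      by (simp add: mult_right_mono)
    with elim have "lam * norm (b k) \<le> norm u"
      by linarith
    then have "inner u (b k) \<le> lam * norm u * norm (b k) + (1 - lam\<^sup>2) * (norm (b k))\<^sup>2 / 2"
      using le inner_le_if_norm_le_diff by blast
    then have "inner u (b k) / norm (b k)
        \<le> (lam * norm u * norm (b k) + (1 - lam\<^sup>2) * (norm (b k))\<^sup>2 / 2) / norm (b k)"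
      by (simp add: divide_right_mono)
    then show ?case
      using b(2)[of k] by (simp add: sgn_div_norm power2_eq_square field_simps)
  qed
  moreover have "(\<lambda>k. inner u (sgn (b k))) \<longlonglongrightarrow> inner u q"
    using q by (intro tendsto_intros)
  moreover have "(\<lambda>k. lam * norm u + (1 - lam\<^sup>2) * norm (b k) / 2) \<longlonglongrightarrow> lam * norm u + (1 - lam\<^sup>2) * 0 / 2"
    using b(1) by (intro tendsto_intros) (auto simp: tendsto_norm_zero_iff)
  ultimately have "inner u q \<le> lam * norm u + (1 - lam\<^sup>2) * 0 / 2"
    by (intro tendsto_le[OF trivial_limit_sequentially]) auto
  moreover have "inner (sgn u) q = inner u q / norm u"
    by (simp add: sgn_div_norm divide_inverse_commute)
  ultimately show ?thesis
    using \<open>u \<noteq> 0\<close> by (simp add: pos_divide_le_eq mult.commute)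
qed

lemma convex_cone_inner_le_neg_norm:
  fixes \<xi> :: "'a::real_inner"
  assumes "0 \<le> \<rho>"
  shows "convex_cone {u. inner \<xi> u \<le> - \<rho> * norm u}"
  unfolding convex_cone_iff
proof (intro conjI ballI allI impI)
  fix x y assume "x \<in> {u. inner \<xi> u \<le> - \<rho> * norm u}" "y \<in> {u. inner \<xi> u \<le> - \<rho> * norm u}"
  moreover have "\<rho> * norm (x + y) \<le> \<rho> * norm x + \<rho> * norm y"
    using assms norm_triangle_ineq[of x y] by (simp add: mult_left_mono flip: distrib_left)
  ultimately show "x + y \<in> {u. inner \<xi> u \<le> - \<rho> * norm u}"
    by (simp add: inner_add_right)
next
  fix x and c :: real assume "x \<in> {u. inner \<xi> u \<le> - \<rho> * norm u}" "0 \<le> c"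
  then show "c *\<^sub>R x \<in> {u. inner \<xi> u \<le> - \<rho> * norm u}"
    using mult_left_mono[of "inner \<xi> x" "- \<rho> * norm x" c] by (simp add: mult.left_commute)
qed simp

definition backward_directions :: "real set \<Rightarrow> (real \<Rightarrow> 'a::euclidean_space) \<Rightarrow> real \<Rightarrow> 'a set" where
  "backward_directions I \<gamma> t = {sgn (\<gamma> t' - \<gamma> t) | t'. t' \<in> I \<and> t' \<le> t \<and> \<gamma> t' \<noteq> \<gamma> t}"

lemma lambda_curve_backward_directions_inner_ge:
  fixes \<gamma> :: "real \<Rightarrow> 'a::euclidean_space"
  assumes curve: "lambda_curve lam I \<gamma>" and "\<bar>lam\<bar> \<le> 1" "t \<in> I"
    and x: "x \<in> backward_directions I \<gamma> t" and y: "y \<in> backward_directions I \<gamma> t"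
  shows "- lam \<le> inner x y"
proof -
  have ordered: "- lam \<le> inner (sgn (\<gamma> t1 - \<gamma> t)) (sgn (\<gamma> t2 - \<gamma> t))"
    if "t1 \<in> I" "t2 \<in> I" "t1 \<le> t2" "t2 \<le> t" "\<gamma> t1 \<noteq> \<gamma> t" "\<gamma> t2 \<noteq> \<gamma> t" for t1 t2
  proof (rule inner_sgn_sgn_ge_if_norm_diff_le)
    show "norm ((\<gamma> t1 - \<gamma> t) - (\<gamma> t2 - \<gamma> t)) \<le> norm (\<gamma> t1 - \<gamma> t) + lam * norm (\<gamma> t2 - \<gamma> t)"
      using curve \<open>t \<in> I\<close> that unfolding lambda_curve_def by simp
  qed (use that \<open>\<bar>lam\<bar> \<le> 1\<close> in auto)
  obtain t1 t2 where "x = sgn (\<gamma> t1 - \<gamma> t)" "y = sgn (\<gamma> t2 - \<gamma> t)"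
    "t1 \<in> I" "t1 \<le> t" "\<gamma> t1 \<noteq> \<gamma> t" "t2 \<in> I" "t2 \<le> t" "\<gamma> t2 \<noteq> \<gamma> t"
    using x y unfolding backward_directions_def by blast
  then show ?thesis
    using ordered[of t1 t2] ordered[of t2 t1] by (cases "t1 \<le> t2") (auto simp: inner_commute)
qed

lemma lambda_curve_backward_direction_sec_plus_le:
  fixes \<gamma> :: "real \<Rightarrow> 'a::euclidean_space"
  assumes curve: "lambda_curve lam I \<gamma>" and cont: "continuous_on I \<gamma>" and "t \<in> I"
    and x: "x \<in> backward_directions I \<gamma> t" and q: "q \<in> sec_plus I \<gamma> t"
  shows "inner x q \<le> lam"
proof -
  obtain t' where t': "x = sgn (\<gamma> t' - \<gamma> t)" "t' \<in> I" "t' \<le> t" "\<gamma> t' \<noteq> \<gamma> t"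
    using x unfolding backward_directions_def by blast
  obtain tk where tk: "\<And>k. tk k \<in> I" "\<And>k. t < tk k" "\<And>k. \<gamma> (tk k) \<noteq> \<gamma> t" "tk \<longlonglongrightarrow> t"
    "(\<lambda>k. (\<gamma> (tk k) - \<gamma> t) /\<^sub>R norm (\<gamma> (tk k) - \<gamma> t)) \<longlonglongrightarrow> q"
    using q unfolding sec_plus_def by blast
  have "(\<lambda>k. \<gamma> (tk k)) \<longlonglongrightarrow> \<gamma> t"
    using cont \<open>t \<in> I\<close> tk(1,4) unfolding continuous_on_sequentially comp_def by blast
  then have "(\<lambda>k. \<gamma> (tk k) - \<gamma> t) \<longlonglongrightarrow> 0"
    by (simp add: LIM_zero)
  moreover have "norm (\<gamma> t' - \<gamma> t) \<le> norm ((\<gamma> t' - \<gamma> t) - (\<gamma> (tk k) - \<gamma> t)) + lam * norm (\<gamma> (tk k) - \<gamma> t)" for k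
    using curve t'(2,3) \<open>t \<in> I\<close> tk(1,2)[of k] unfolding lambda_curve_def
    by (force simp: norm_minus_commute)
  ultimately show ?thesis
    unfolding t'(1) using t'(4) tk(3,5)
    by (intro inner_sgn_limit_le) (auto simp: sgn_div_norm)
qed

lemma backcone_inner_le:
  fixes \<gamma> :: "real \<Rightarrow> 'a::euclidean_space"
  assumes "0 \<le> \<rho>" and dirs: "\<And>x. x \<in> backward_directions I \<gamma> t \<Longrightarrow> inner \<xi> x \<le> - \<rho>"
    and "u \<in> backcone I \<gamma> t"
  shows "inner \<xi> u \<le> - \<rho> * norm u"
proof -
  let ?W = "{u. inner \<xi> u \<le> - \<rho> * norm u}"
  have "\<gamma> t' - \<gamma> t \<in> ?W" if "t' \<in> I" "t' \<le> t" for t'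
  proof (cases "\<gamma> t' = \<gamma> t")
    case False
    then have "inner \<xi> (sgn (\<gamma> t' - \<gamma> t)) \<le> - \<rho>"
      using dirs that unfolding backward_directions_def by blast
    then have "norm (\<gamma> t' - \<gamma> t) * inner \<xi> (sgn (\<gamma> t' - \<gamma> t)) \<le> norm (\<gamma> t' - \<gamma> t) * - \<rho>"
      by (rule mult_left_mono) simp_all
    then show ?thesis
      using False by (simp add: sgn_div_norm mult.commute flip: mult.assoc)
  qed simp
  then have "convex_cone hull {\<gamma> t' - \<gamma> t | t'. t' \<in> I \<and> t' \<le> t} \<subseteq> ?W"
    using convex_cone_inner_le_neg_norm[OF \<open>0 \<le> \<rho>\<close>] by (intro hull_minimal) auto
  moreover have "closed ?W"
    by (intro closed_Collect_le continuous_intros)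
  ultimately have "backcone I \<gamma> t \<subseteq> ?W"
    unfolding backcone_def by (rule closure_minimal)
  then show ?thesis
    using \<open>u \<in> backcone I \<gamma> t\<close> by blast
qed

theorem lemma3p4:
  fixes \<gamma> :: "real \<Rightarrow> 'a::euclidean_space" and I :: "real set" and lam :: real
  assumes "is_interval I"
    and "-1 \<le> lam" and "lam < 1 / real DIM('a)"
    and "continuous_on I \<gamma>"
    and "lambda_curve lam I \<gamma>"
  shows "\<exists>\<rho>>0. \<forall>t\<in>I. \<forall>q\<in>sec_plus I \<gamma> t. \<exists>\<xi>\<in>sphere 0 1.
           (\<forall>u\<in>backcone I \<gamma> t. norm u = 1 \<longrightarrow> inner \<xi> u \<le> - \<rho>) \<and> inner \<xi> q \<ge> \<rho>"
proof -
  define \<rho> where "\<rho> = sqrt ((1 - lam * DIM('a)) / (DIM('a) + 1)) / 2"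
  have "lam * DIM('a) < 1"
    using assms(3) by (simp add: less_divide_eq mult.commute)
  then have "\<rho> > 0"
    unfolding \<rho>_def by simp
  have "1 / real DIM('a) \<le> 1"
    by simp
  then have "\<bar>lam\<bar> \<le> 1"
    using assms(2,3) by linarith
  have "\<exists>\<xi>\<in>sphere 0 1. (\<forall>u\<in>backcone I \<gamma> t. norm u = 1 \<longrightarrow> inner \<xi> u \<le> - \<rho>) \<and> inner \<xi> q \<ge> \<rho>"
    if t: "t \<in> I" and q: "q \<in> sec_plus I \<gamma> t" for t q
  proof -
    let ?S = "insert (- q) (backward_directions I \<gamma> t)"
    have "norm x = 1" if "x \<in> ?S" for x
      using that q unfolding backward_directions_def sec_plus_def by (auto simp: norm_sgn)
    moreover have "- lam \<le> inner x y" if "x \<in> ?S" "y \<in> ?S" "x \<noteq> y" for x y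
      using that lambda_curve_backward_directions_inner_ge[OF assms(5) \<open>\<bar>lam\<bar> \<le> 1\<close> t]
        lambda_curve_backward_direction_sec_plus_le[OF assms(5,4) t _ q]
      by (auto simp: inner_commute[of q])
    ultimately obtain \<xi> where "\<xi> \<in> sphere 0 1" "\<forall>x\<in>?S. inner \<xi> x \<le> - \<rho>"
      using unit_vectors_strictly_separated[of ?S lam] assms(2,3) unfolding \<rho>_def by blast
    then show ?thesis
      using backcone_inner_le[of \<rho> I \<gamma> t \<xi>] \<open>\<rho> > 0\<close> by force
  qed
  with \<open>\<rho> > 0\<close> show ?thesis
    by blast
qed

end
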